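(* Let $\Pi_C(P)=\min(\max(P,F),C)\,Q$ with $0<F\le C$, and let $$V_C(P)=E\left[\int_0^T \Pi_C(P_t)e^{-rt}\,dt+\int_T^\infty P_tQe^{-rt}\,dt\;\Big|\;P_0=P\right]$$ be the value of the project with a finite collar (sliding premium with cap and floor) contract of duration $T$. Then $$V_C(P)=V_{CP}(P)-S_C(P)+\frac{PQ}{r-\mu}e^{-(r-\mu)T},$$ where $$S_C(P)=E_1P^{\beta_1}\Phi(-d_{\beta_1}(P,F))+\frac{FQ}{r}e^{-rT}\Phi(-d_0(P,F))+G_1P^{\beta_1}\big(\Phi(d_{\beta_1}(P,F))-\Phi(d_{\beta_1}(P,C))\big)+G_2P^{\beta_2}\big(\Phi(d_{\beta_2}(P,F))-\Phi(d_{\beta_2}(P,C))\big)+\frac{PQ}{r-\mu}e^{-(r-\mu)T}\big(\Phi(d_1(P,F))-\Phi(d_1(P,C))\big)+H_2P^{\beta_2}\Phi(d_{\beta_2}(P,C))+\frac{CQ}{r}e^{-rT}\Phi(d_0(P,C)).$$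
   Context: The energy price $P=(P_t)_{t\ge0}$ solves $dP_t=\mu P_t\,dt+\sigma P_t\,dW_t$, $P_0=P>0$, under a risk-neutral measure, where $W$ is a standard Brownian motion, $\sigma>0$, and the interest rate $r$ satisfies $r>\mu$. $Q>0$ is the (constant) annual production and $T>0$ the contract duration. Let $\beta_{1,2}=\frac12-\frac{\mu}{\sigma^2}\pm\sqrt{\left(-\frac12+\frac{\mu}{\sigma^2}\right)^2+\frac{2r}{\sigma^2}}$ (so $\beta_1>1$, $\beta_2<0$). $\Phi$ is the standard normal distribution function and, for $\beta\in\{0,1,\beta_1,\beta_2\}$ and $X>0$, $d_\beta(P,X)=\dfrac{\ln(P/X)+(\mu+\sigma^2(\beta-\frac12))T}{\sigma\sqrt T}$. Constants: $E_1=\frac{(F^{1-\beta_1}-C^{1-\beta_1})Q}{\beta_1-\beta_2}\left(\frac{\beta_2}{r}-\frac{\beta_2-1}{r-\mu}\right)$, $G_1=-\frac{C^{1-\beta_1}Q}{\beta_1-\beta_2}\left(\frac{\beta_2}{r}-\frac{\beta_2-1}{r-\mu}\right)$, $G_2=\frac{F^{1-\beta_2}Q}{\beta_1-\beta_2}\left(\frac{\beta_1}{r}-\frac{\beta_1-1}{r-\mu}\right)$, $H_2=\frac{(F^{1-\beta_2}-C^{1-\beta_2})Q}{\beta_1-\beta_2}\left(\frac{\beta_1}{r}-\frac{\beta_1-1}{r-\mu}\right)$. $V_{CP}$ (the value of a perpetual collar contract) is $V_{CP}(P)=E_1P^{\beta_1}+\frac{FQ}{r}$ for $P<F$; $V_{CP}(P)=G_1P^{\beta_1}+G_2P^{\beta_2}+\frac{PQ}{r-\mu}$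 for $F\le P<C$; $V_{CP}(P)=H_2P^{\beta_2}+\frac{CQ}{r}$ for $P\ge C$. *)

theory Defs
  imports "HOL-Probability.Probability"
begin

definition Phi :: "real \<Rightarrow> real" where
  "Phi x = (LINT y:{..x}|lborel. std_normal_density y)"

definition std_brownian_motion :: "'a measure \<Rightarrow> (real \<Rightarrow> 'a \<Rightarrow> real) \<Rightarrow> bool" where
  "std_brownian_motion M W \<longleftrightarrow>
     prob_space M \<and>
     (\<forall>t\<ge>0. W t \<in> borel_measurable M) \<and>
     (\<forall>\<omega>\<in>space M. W 0 \<omega> = 0) \<and>
     (\<forall>\<omega>\<in>space M. continuous_on {0..} (\<lambda>t. W t \<omega>)) \<and>
     (\<forall>s t. 0 \<le> s \<and> s < t \<longrightarrow>
        distributed M lborel (\<lambda>\<omega>. W t \<omega> - W s \<omega>) (normal_density 0 (sqrt (t - s)))) \<and>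
     (\<forall>(ts :: nat \<Rightarrow> real) n. 0 \<le> ts 0 \<and> strict_mono ts \<longrightarrow>
        prob_space.indep_vars M (\<lambda>_. borel) (\<lambda>i \<omega>. W (ts (Suc i)) \<omega> - W (ts i) \<omega>) {..<n})"

text \<open>Geometric Brownian motion started at P: the (strong) solution of
  dP_t = mu P_t dt + sig P_t dW_t, P_0 = P.\<close>
definition gbm :: "real \<Rightarrow> real \<Rightarrow> real \<Rightarrow> (real \<Rightarrow> 'a \<Rightarrow> real) \<Rightarrow> real \<Rightarrow> 'a \<Rightarrow> real" where
  "gbm mu sig P W t \<omega> = P * exp ((mu - sig^2 / 2) * t + sig * W t \<omega>)"

definition beta1 :: "real \<Rightarrow> real \<Rightarrow> real \<Rightarrow> real" where
  "beta1 mu sig r = 1/2 - mu / sig^2 + sqrt ((-1/2 + mu / sig^2)^2 + 2 * r / sig^2)"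

definition beta2 :: "real \<Rightarrow> real \<Rightarrow> real \<Rightarrow> real" where
  "beta2 mu sig r = 1/2 - mu / sig^2 - sqrt ((-1/2 + mu / sig^2)^2 + 2 * r / sig^2)"

definition dbeta :: "real \<Rightarrow> real \<Rightarrow> real \<Rightarrow> real \<Rightarrow> real \<Rightarrow> real \<Rightarrow> real" where
  "dbeta mu sig T \<beta> P X = (ln (P / X) + (mu + sig^2 * (\<beta> - 1/2)) * T) / (sig * sqrt T)"

definition collar_payoff :: "real \<Rightarrow> real \<Rightarrow> real \<Rightarrow> real \<Rightarrow> real" where
  "collar_payoff F C Q P = min (max P F) C * Q"

definition V_C :: "'a measure \<Rightarrow> (real \<Rightarrow> 'a \<Rightarrow> real) \<Rightarrow> real \<Rightarrow> real \<Rightarrow> real \<Rightarrow> real \<Rightarrow> real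
    \<Rightarrow> real \<Rightarrow> real \<Rightarrow> real \<Rightarrow> real" where
  "V_C M W mu sig r Q T F C P =
     (\<integral>\<omega>. ((LINT t:{0..T}|lborel. collar_payoff F C Q (gbm mu sig P W t \<omega>) * exp (- r * t))
           + (LINT t:{T..}|lborel. gbm mu sig P W t \<omega> * Q * exp (- r * t))) \<partial>M)"

context
  fixes mu sig r Q F C :: real
begin

definition "b1 = beta1 mu sig r"
definition "b2 = beta2 mu sig r"

definition "E1 = (F powr (1 - b1) - C powr (1 - b1)) * Q / (b1 - b2) * (b2 / r - (b2 - 1) / (r - mu))"
definition "G1 = - (C powr (1 - b1)) * Q / (b1 - b2) * (b2 / r - (b2 - 1) / (r - mu))"
definition "G2 = F powr (1 - b2) * Q / (b1 - b2) * (b1 / r - (b1 - 1) / (r - mu))"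
definition "H2 = (F powr (1 - b2) - C powr (1 - b2)) * Q / (b1 - b2) * (b1 / r - (b1 - 1) / (r - mu))"

definition V_CP :: "real \<Rightarrow> real" where
  "V_CP P =
     (if P < F then E1 * P powr b1 + F * Q / r
      else if P < C then G1 * P powr b1 + G2 * P powr b2 + P * Q / (r - mu)
      else H2 * P powr b2 + C * Q / r)"

definition S_C :: "real \<Rightarrow> real \<Rightarrow> real" where
  "S_C T P =
     (let d = dbeta mu sig T in
      E1 * P powr b1 * Phi (- d b1 P F)
      + F * Q / r * exp (- r * T) * Phi (- d 0 P F)
      + G1 * P powr b1 * (Phi (d b1 P F) - Phi (d b1 P C))
      + G2 * P powr b2 * (Phi (d b2 P F) - Phi (d b2 P C))
      + P * Q / (r - mu) * exp (- (r - mu) * T) * (Phi (d 1 P F) - Phi (d 1 P C))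
      + H2 * P powr b2 * Phi (d b2 P C)
      + C * Q / r * exp (- r * T) * Phi (d 0 P C))"

end

end

theory Submission
  imports Defs
begin

text \<open>
  By Tonelli's theorem V_C P = int_0^T K t dt + int_T^oo P Q e^(-(r - mu) t) dt, where
  K t = e^(-r t) E Pi_C(P_t). Since Pi_C p = Q (F + (p - F)^+ - (p - C)^+), K is a combination of
  two Black-Scholes call prices. The function t \<mapsto> S_C t P is e^(-r t) E V_CP(P_t), a
  combination of the discounted partial moments e^(-r t) E (P_t^b; P_t > X) with b in {beta1, beta2, 1, 0}
  and X in {F, C}. Differentiating in t, the terms carrying the Gaussian density cancel because
  V_CP satisfies value matching and smooth pasting at F and C, and the moments with b = beta1, beta2
  are constant because beta1, beta2 solve E P_t^b = P^b e^(r t). What remains is dS_C/dt = -K, and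
  S_C t P tends to V_CP P as t tends to 0, so int_0^T K = V_CP P - S_C T P.
\<close>

section \<open>The standard normal distribution function\<close>

lemma set_integrable_std_normal_density:
  "A \<in> sets borel \<Longrightarrow> set_integrable lborel A std_normal_density"
  unfolding set_integrable_def by (intro integrable_mult_indicator) auto

lemma real_distribution_std_normal: "real_distribution (density lborel std_normal_density)"
  unfolding real_distribution_def real_distribution_axioms_def
  using prob_space_normal_density by auto

lemma Phi_eq_cdf: "Phi x = cdf (density lborel std_normal_density) x"
proof -
  have "cdf (density lborel std_normal_density) x
      = enn2real (\<integral>\<^sup>+ y. ennreal (std_normal_density y) * indicator {..x} y \<partial>lborel)"
    by (simp add: cdf_def measure_def emeasure_density)
  also have "\<dots> = enn2real (\<integral>\<^sup>+ y. ennreal (indicator {..x} y * std_normal_density y) \<partial>lborel)"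
    by (intro arg_cong[where f=enn2real] nn_integral_cong) (auto simp: indicator_def)
  also have "\<dots> = Phi x"
    unfolding Phi_def set_lebesgue_integral_def by (subst integral_eq_nn_integral) auto
  finally show ?thesis by simp
qed

lemma Phi_nonneg: "0 \<le> Phi x"
  unfolding Phi_eq_cdf
  by (rule finite_borel_measure.cdf_nonneg
      [OF real_distribution.finite_borel_measure_M[OF real_distribution_std_normal]])

lemma Phi_mono: "x \<le> y \<Longrightarrow> Phi x \<le> Phi y"
  unfolding Phi_eq_cdf
  by (rule finite_borel_measure.cdf_nondecreasing
      [OF real_distribution.finite_borel_measure_M[OF real_distribution_std_normal]])

lemma Phi_at_top: "(Phi \<longlongrightarrow> 1) at_top"
  using real_distribution.cdf_lim_at_top_prob[OF real_distribution_std_normal]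
  by (simp add: Phi_eq_cdf[abs_def])

lemma Phi_at_bot: "(Phi \<longlongrightarrow> 0) at_bot"
  using finite_borel_measure.cdf_lim_at_bot
      [OF real_distribution.finite_borel_measure_M[OF real_distribution_std_normal]]
  by (simp add: Phi_eq_cdf[abs_def])

lemma set_integral_normal_density_greaterThan:
  "(LINT z:{c<..}|lborel. normal_density b 1 z) = Phi (b - c)"
proof -
  have "(LINT z:{c<..}|lborel. normal_density b 1 z)
      = (\<integral>y. indicator {c<..} (b + (-1) * y) * normal_density b 1 (b + (-1) * y) \<partial>lborel)"
    using lborel_integral_real_affine[of "-1" "\<lambda>z. indicator {c<..} z * normal_density b 1 z" b]
    by (simp add: set_lebesgue_integral_def)
  also have "\<dots> = (\<integral>y. indicator {..b - c} y * std_normal_density y \<partial>lborel)"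
  proof (rule integral_cong_AE)
    show "AE y in lborel. indicator {c<..} (b + (-1) * y) * normal_density b 1 (b + (-1) * y)
        = indicator {..b - c} y * std_normal_density y"
      using AE_lborel_singleton[of "b - c"]
      by eventually_elim (auto simp: indicator_def normal_density_def power2_eq_square)
  qed auto
  finally show ?thesis
    by (simp add: Phi_def set_lebesgue_integral_def)
qed

lemma Phi_minus: "Phi (- x) = 1 - Phi x"
proof -
  have "Phi x + (LINT z:{x<..}|lborel. std_normal_density z)
      = (LINT z:{..x} \<union> {x<..}|lborel. std_normal_density z)"
    unfolding Phi_def
    by (rule set_integral_Un[symmetric]) (auto intro: set_integrable_std_normal_density)
  also have "{..x} \<union> {x<..} = (UNIV :: real set)" by auto
  also have "(LINT z:UNIV|lborel. std_normal_density z) = 1"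
    by (simp add: set_lebesgue_integral_def)
  finally show ?thesis
    using set_integral_normal_density_greaterThan[of x 0] by simp
qed

lemma Phi_zero: "Phi 0 = 1/2"
  using Phi_minus[of 0] by simp

lemma Phi_eq_add_integral:
  assumes "a \<le> x"
  shows "Phi x = Phi a + integral {a..x} std_normal_density"
proof -
  have "Phi x = (LINT z:{..a} \<union> {a<..x}|lborel. std_normal_density z)"
    unfolding Phi_def using assms by (intro arg_cong[where f="\<lambda>A. set_lebesgue_integral lborel A _"]) auto
  also have "\<dots> = Phi a + (LINT z:{a<..x}|lborel. std_normal_density z)"
    unfolding Phi_def by (rule set_integral_Un) (auto intro: set_integrable_std_normal_density)
  also have "(LINT z:{a<..x}|lborel. std_normal_density z) = (LINT z:{a..x}|lborel. std_normal_density z)"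
    unfolding set_lebesgue_integral_def using AE_lborel_singleton[of a]
    by (intro integral_cong_AE) (auto elim!: eventually_mono simp: indicator_def)
  also have "\<dots> = integral {a..x} std_normal_density"
    by (rule set_borel_integral_eq_integral) (auto intro: set_integrable_std_normal_density)
  finally show ?thesis .
qed

lemma has_real_derivative_Phi: "(Phi has_real_derivative std_normal_density x) (at x)"
proof -
  have "continuous_on {x - 1..x + 1} std_normal_density"
    by (auto simp: normal_density_def intro!: continuous_intros)
  then have "((\<lambda>y. integral {x - 1..y} std_normal_density) has_real_derivative std_normal_density x)
      (at x within {x - 1..x + 1})"
    by (rule integral_has_real_derivative) auto
  then have "((\<lambda>y. Phi (x - 1) + integral {x - 1..y} std_normal_density)
      has_real_derivative std_normal_density x) (at x)"
    by (simp add: at_within_interior[of x "{x - 1..x + 1}"]) (auto intro!: derivative_eq_intros)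
  then show ?thesis
    by (rule has_field_derivative_transform_within_open[where S="{x - 1<..<x + 1}"])
       (auto simp: Phi_eq_add_integral[symmetric])
qed

lemma has_real_derivative_Phi_comp [derivative_intros]:
  "(f has_real_derivative f') (at x) \<Longrightarrow>
    ((\<lambda>y. Phi (f y)) has_real_derivative std_normal_density (f x) * f') (at x)"
  using DERIV_chain2[OF has_real_derivative_Phi] by (simp add: mult.commute)

lemma isCont_Phi: "isCont Phi x"
  using has_real_derivative_Phi DERIV_isCont by blast

lemma isCont_Phi_comp [continuous_intros]: "isCont f x \<Longrightarrow> isCont (\<lambda>y. Phi (f y)) x"
  by (rule isCont_o2[OF _ isCont_Phi])

section \<open>Gaussian integrals\<close>

lemma std_normal_density_mult_exp:
  "std_normal_density z * exp (b * z) = exp (b\<^sup>2 / 2) * normal_density b 1 z"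
proof -
  have "b * z + - (z * z) / 2 = b * b / 2 + - ((z - b) * (z - b)) / 2"
    by (simp add: field_simps)
  then show ?thesis by (simp add: normal_density_def mult_exp_exp power2_eq_square)
qed

lemma integrable_std_normal_density_mult_exp:
  "integrable lborel (\<lambda>z. std_normal_density z * exp (b * z))"
  unfolding std_normal_density_mult_exp by simp

lemma set_integrable_std_normal_density_mult_exp:
  "A \<in> sets borel \<Longrightarrow> set_integrable lborel A (\<lambda>z. std_normal_density z * exp (b * z))"
  unfolding set_integrable_def using integrable_std_normal_density_mult_exp
  by (intro integrable_mult_indicator) auto

lemma integral_std_normal_density_mult_exp:
  "(\<integral>z. std_normal_density z * exp (b * z) \<partial>lborel) = exp (b\<^sup>2 / 2)"
  unfolding std_normal_density_mult_exp by simp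

lemma set_integral_std_normal_density_mult_exp_greaterThan:
  "(LINT z:{c<..}|lborel. std_normal_density z * exp (b * z)) = exp (b\<^sup>2 / 2) * Phi (b - c)"
  unfolding std_normal_density_mult_exp set_integral_mult_right
  by (simp add: set_integral_normal_density_greaterThan)

lemma std_normal_call:
  fixes a b X P :: real
  assumes X: "0 < X" and P: "0 < P" and b: "0 < b"
  defines "c \<equiv> (ln (X / P) - a) / b"
  shows "integrable lborel (\<lambda>z. std_normal_density z * max (P * exp (a + b * z) - X) 0)"
    and "(\<integral>z. std_normal_density z * max (P * exp (a + b * z) - X) 0 \<partial>lborel)
           = P * exp (a + b\<^sup>2 / 2) * Phi (b - c) - X * Phi (- c)"
proof -
  have exercise_iff: "X < P * exp (a + b * z) \<longleftrightarrow> c < z" for z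
  proof -
    have "X < P * exp (a + b * z) \<longleftrightarrow> X / P < exp (a + b * z)"
      using P by (simp add: field_simps)
    also have "\<dots> \<longleftrightarrow> ln (X / P) < a + b * z"
      using X P by (metis exp_less_cancel_iff exp_ln divide_pos_pos)
    also have "\<dots> \<longleftrightarrow> c < z"
      using b by (simp add: c_def field_simps)
    finally show ?thesis .
  qed
  define g where "g z = P * exp a * (std_normal_density z * exp (b * z)) - X * std_normal_density z" for z
  have eq: "std_normal_density z * max (P * exp (a + b * z) - X) 0 = indicator {c<..} z * g z" for z
    using exercise_iff[of z] by (auto simp: g_def exp_add algebra_simps)
  have g: "set_integrable lborel {c<..} g"
    unfolding g_def
    by (intro set_integral_diff set_integrable_mult_right set_integrable_std_normal_density
        set_integrable_std_normal_density_mult_exp) auto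
  then show "integrable lborel (\<lambda>z. std_normal_density z * max (P * exp (a + b * z) - X) 0)"
    by (simp add: eq set_integrable_def)
  have "(\<integral>z. std_normal_density z * max (P * exp (a + b * z) - X) 0 \<partial>lborel)
      = (LINT z:{c<..}|lborel. g z)"
    by (simp add: eq set_lebesgue_integral_def)
  also have "\<dots> = P * exp a * (LINT z:{c<..}|lborel. std_normal_density z * exp (b * z))
      - X * (LINT z:{c<..}|lborel. std_normal_density z)"
    unfolding g_def
    by (subst set_integral_diff)
       (auto simp: set_integral_mult_right intro!: set_integrable_mult_right
         set_integrable_std_normal_density set_integrable_std_normal_density_mult_exp)
  also have "\<dots> = P * exp (a + b\<^sup>2 / 2) * Phi (b - c) - X * Phi (- c)"
    using set_integral_normal_density_greaterThan[of c 0]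
    by (simp add: set_integral_std_normal_density_mult_exp_greaterThan exp_add)
  finally show "(\<integral>z. std_normal_density z * max (P * exp (a + b * z) - X) 0 \<partial>lborel)
      = P * exp (a + b\<^sup>2 / 2) * Phi (b - c) - X * Phi (- c)" .
qed

text \<open>The geometric Brownian motion at time t, written through the standard normal
  variable z = W_t / sqrt t.\<close>
abbreviation gbm_normal :: "real \<Rightarrow> real \<Rightarrow> real \<Rightarrow> real \<Rightarrow> real \<Rightarrow> real" where
  "gbm_normal mu sig P t z \<equiv> P * exp ((mu - sig\<^sup>2 / 2) * t + sig * (sqrt t * z))"

lemma gbm_call_integral:
  assumes sig: "0 < sig" and t: "0 < t" and P: "0 < P" and X: "0 < X"
  shows "integrable lborel
           (\<lambda>z. std_normal_density z * max (gbm_normal mu sig P t z - X) 0)"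
    and "(\<integral>z. std_normal_density z * max (gbm_normal mu sig P t z - X) 0 \<partial>lborel)
           = P * exp (mu * t) * Phi (dbeta mu sig t 1 P X) - X * Phi (dbeta mu sig t 0 P X)"
proof -
  define a where "a = (mu - sig\<^sup>2 / 2) * t"
  define b where "b = sig * sqrt t"
  have b: "0 < b" using sig t by (simp add: b_def)
  have gbm_eq: "gbm_normal mu sig P t z = P * exp (a + b * z)" for z
    by (simp add: a_def b_def mult.assoc)
  obtain u where u: "0 < u" "t = u\<^sup>2" using t by (metis real_sqrt_gt_0_iff real_sqrt_pow2 less_eq_real_def)
  have d0: "- ((ln (X / P) - a) / b) = dbeta mu sig t 0 P X"
    using P X sig u by (simp add: dbeta_def a_def b_def ln_div field_simps)
  have d1: "b - (ln (X / P) - a) / b = dbeta mu sig t 1 P X"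
    using P X sig u by (simp add: dbeta_def a_def b_def ln_div field_simps power2_eq_square)
  have ab: "a + b\<^sup>2 / 2 = mu * t"
    using t by (simp add: a_def b_def power_mult_distrib algebra_simps)
  show "integrable lborel
      (\<lambda>z. std_normal_density z * max (gbm_normal mu sig P t z - X) 0)"
    unfolding gbm_eq by (rule std_normal_call(1)[OF X P b])
  show "(\<integral>z. std_normal_density z * max (gbm_normal mu sig P t z - X) 0 \<partial>lborel)
      = P * exp (mu * t) * Phi (dbeta mu sig t 1 P X) - X * Phi (dbeta mu sig t 0 P X)"
    unfolding gbm_eq std_normal_call(2)[OF X P b] ab d0 d1 ..
qed

lemma gbm_mean_integral:
  assumes "0 < t"
  shows "integrable lborel (\<lambda>z. std_normal_density z * gbm_normal mu sig P t z)"
    and "(\<integral>z. std_normal_density z * gbm_normal mu sig P t z \<partial>lborel)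
           = P * exp (mu * t)"
proof -
  have eq: "std_normal_density z * (gbm_normal mu sig P t z)
      = P * exp ((mu - sig\<^sup>2 / 2) * t) * (std_normal_density z * exp (sig * sqrt t * z))" for z
    by (simp add: mult_exp_exp algebra_simps)
  show "integrable lborel (\<lambda>z. std_normal_density z * gbm_normal mu sig P t z)"
    unfolding eq by (intro integrable_mult_right integrable_std_normal_density_mult_exp)
  have "(sig * sqrt t)\<^sup>2 = sig\<^sup>2 * t" using assms by (simp add: power_mult_distrib)
  then show "(\<integral>z. std_normal_density z * gbm_normal mu sig P t z \<partial>lborel)
      = P * exp (mu * t)"
    unfolding eq integral_mult_right_zero integral_std_normal_density_mult_exp
    by (simp add: mult.assoc mult_exp_exp algebra_simps)
qed

section \<open>Brownian motion and expected income streams\<close>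

lemma tendsto_of_int_floor_mult_divide: "(\<lambda>n. of_int \<lfloor>real n * s\<rfloor> / real n) \<longlonglongrightarrow> s"
proof (rule tendsto_sandwich[where f="\<lambda>n. s - 1 / real n" and h="\<lambda>n. s"])
  show "\<forall>\<^sub>F n in sequentially. s - 1 / real n \<le> of_int \<lfloor>real n * s\<rfloor> / real n"
    using eventually_gt_at_top[of "0::nat"]
  proof eventually_elim
    case (elim n)
    have "(real n * s - 1) / real n \<le> of_int \<lfloor>real n * s\<rfloor> / real n"
      by (intro divide_right_mono) linarith+
    then show ?case using elim by (simp add: field_simps)
  qed
  show "\<forall>\<^sub>F n in sequentially. of_int \<lfloor>real n * s\<rfloor> / real n \<le> s"
    using eventually_gt_at_top[of "0::nat"]
  proof eventually_elim
    case (elim n)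
    have "of_int \<lfloor>real n * s\<rfloor> / real n \<le> real n * s / real n"
      by (intro divide_right_mono) linarith+
    then show ?case using elim by simp
  qed
  show "(\<lambda>n. s - 1 / real n) \<longlonglongrightarrow> s"
    using tendsto_diff[OF tendsto_const[of s] lim_inverse_n'] by simp
qed simp

context
  fixes M :: "'a measure" and W :: "real \<Rightarrow> 'a \<Rightarrow> real"
  assumes BM: "std_brownian_motion M W"
begin

lemma std_brownian_motion_prob_space: "prob_space M"
  using BM unfolding std_brownian_motion_def by auto

lemma std_brownian_motion_measurable: "0 \<le> t \<Longrightarrow> W t \<in> borel_measurable M"
  using BM unfolding std_brownian_motion_def by auto

lemma std_brownian_motion_distributed:
  assumes "0 < t"
  shows "distributed M lborel (\<lambda>\<omega>. W t \<omega> - W 0 \<omega>) (normal_density 0 (sqrt t))"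
proof -
  have "\<forall>s t. 0 \<le> s \<and> s < t \<longrightarrow>
      distributed M lborel (\<lambda>\<omega>. W t \<omega> - W s \<omega>) (normal_density 0 (sqrt (t - s)))"
    using BM unfolding std_brownian_motion_def by blast
  from this[rule_format, of 0 t] show ?thesis using assms by simp
qed

lemma nn_integral_std_brownian_motion:
  assumes t: "0 < t" and G[measurable]: "G \<in> borel_measurable borel"
  shows "(\<integral>\<^sup>+\<omega>. ennreal (G (W t \<omega>)) \<partial>M)
           = (\<integral>\<^sup>+z. ennreal (std_normal_density z * G (sqrt t * z)) \<partial>lborel)"
proof -
  have d: "distributed M lborel (\<lambda>\<omega>. (W t \<omega> - W 0 \<omega> - 0) / sqrt t) std_normal_density"
    using prob_space.normal_standard_normal_convert[OF std_brownian_motion_prob_space,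
        where \<sigma>="sqrt t" and X="\<lambda>\<omega>. W t \<omega> - W 0 \<omega>" and \<mu>=0]
      std_brownian_motion_distributed[OF t] t by simp
  have "(\<integral>\<^sup>+z. ennreal (std_normal_density z) * ennreal (G (sqrt t * z)) \<partial>lborel)
      = (\<integral>\<^sup>+\<omega>. ennreal (G (sqrt t * ((W t \<omega> - W 0 \<omega> - 0) / sqrt t))) \<partial>M)"
    by (rule distributed_nn_integral[OF d]) measurable
  also have "\<dots> = (\<integral>\<^sup>+\<omega>. ennreal (G (W t \<omega>)) \<partial>M)"
    using BM t unfolding std_brownian_motion_def by (intro nn_integral_cong) simp
  finally show ?thesis by (simp add: ennreal_mult')
qed

lemma nn_integral_gbm:
  assumes t: "0 < t" and P: "0 < P"
    and u: "u \<in> borel_measurable borel" "\<And>p. 0 < p \<Longrightarrow> 0 \<le> u p"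
    and int: "integrable lborel (\<lambda>z. std_normal_density z * u (gbm_normal mu sig P t z))"
  shows "(\<integral>\<^sup>+\<omega>. ennreal (u (gbm mu sig P W t \<omega>)) \<partial>M)
           = ennreal (\<integral>z. std_normal_density z * u (gbm_normal mu sig P t z) \<partial>lborel)"
proof -
  have "(\<integral>\<^sup>+\<omega>. ennreal (u (gbm mu sig P W t \<omega>)) \<partial>M)
      = (\<integral>\<^sup>+z. ennreal (std_normal_density z * u (gbm_normal mu sig P t z)) \<partial>lborel)"
    unfolding gbm_def using t u(1) by (intro nn_integral_std_brownian_motion) auto
  also have "\<dots> = ennreal (\<integral>z. std_normal_density z * u (gbm_normal mu sig P t z) \<partial>lborel)"
    using int P u(2) by (intro nn_integral_eq_integral AE_I2 mult_nonneg_nonneg) auto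
  finally show ?thesis .
qed

text \<open>By path continuity W is the pointwise limit of the processes W (\<lfloor>n t\<rfloor> / n), each of
  which depends on t only through the integer \<lfloor>n t\<rfloor>.\<close>
lemma std_brownian_motion_measurable_joint [measurable]:
  "(\<lambda>x. W (max 0 (snd x)) (fst x)) \<in> borel_measurable (M \<Otimes>\<^sub>M lborel)"
proof (rule borel_measurable_LIMSEQ_real)
  define u where "u n x = W (max 0 (of_int \<lfloor>real n * snd x\<rfloor> / real n)) (fst x)" for n x
  show "u n \<in> borel_measurable (M \<Otimes>\<^sub>M lborel)" for n
  proof -
    have "(\<lambda>x. W (max 0 (of_int i / real n)) (fst x)) \<in> borel_measurable (M \<Otimes>\<^sub>M lborel)" for i :: int
      by (rule measurable_compose[OF measurable_fst std_brownian_motion_measurable]) simp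
    moreover have "(\<lambda>x. \<lfloor>real n * snd x\<rfloor>) \<in> measurable (M \<Otimes>\<^sub>M lborel) (count_space UNIV)"
      by measurable
    ultimately show ?thesis
      unfolding u_def[abs_def] by (rule measurable_compose_countable') simp
  qed
  show "(\<lambda>n. u n x) \<longlonglongrightarrow> W (max 0 (snd x)) (fst x)" if "x \<in> space (M \<Otimes>\<^sub>M lborel)" for x
  proof -
    have "continuous_on {0..} (\<lambda>t. W t (fst x))"
      using BM that unfolding std_brownian_motion_def by (auto simp: space_pair_measure)
    moreover have "(\<lambda>n. max 0 (of_int \<lfloor>real n * snd x\<rfloor> / real n)) \<longlonglongrightarrow> max 0 (snd x)"
      by (intro tendsto_max tendsto_const tendsto_of_int_floor_mult_divide)
    ultimately show ?thesis
      unfolding u_def by (rule continuous_on_tendsto_compose) auto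
  qed
qed

end

lemma has_bochner_integral_inner_integral:
  fixes g :: "'a \<times> 'b \<Rightarrow> real"
  assumes "sigma_finite_measure M" and "sigma_finite_measure N"
    and g: "g \<in> borel_measurable (M \<Otimes>\<^sub>M N)" "\<And>x. 0 \<le> g x"
    and v: "(\<integral>\<^sup>+y. (\<integral>\<^sup>+x. ennreal (g (x, y)) \<partial>M) \<partial>N) = ennreal v" "0 \<le> v"
  shows "has_bochner_integral M (\<lambda>x. \<integral>y. g (x, y) \<partial>N) v"
proof -
  interpret pair_sigma_finite M N
    using assms by (simp add: pair_sigma_finite_def)
  have g': "(\<lambda>z. ennreal (g z)) \<in> borel_measurable (M \<Otimes>\<^sub>M N)"
    by (rule measurable_compose[OF g(1) measurable_ennreal])
  define I where "I x = (\<integral>\<^sup>+y. ennreal (g (x, y)) \<partial>N)" for x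
  have I: "I \<in> borel_measurable M"
    unfolding I_def by (rule M2.borel_measurable_nn_integral_fst[OF g'])
  have int_I: "(\<integral>\<^sup>+x. I x \<partial>M) = ennreal v"
    unfolding I_def Fubini[OF g', symmetric] by (rule v(1))
  then have "AE x in M. I x \<noteq> \<infinity>"
    using nn_integral_PInf_AE[OF I] by simp
  then have "(\<integral>\<^sup>+x. ennreal (enn2real (I x)) \<partial>M) = (\<integral>\<^sup>+x. I x \<partial>M)"
    by (rule nn_integral_cong_AE[OF AE_mp]) (simp add: less_top)
  then have hb: "has_bochner_integral M (\<lambda>x. enn2real (I x)) v"
    using I v(2) unfolding int_I by (intro has_bochner_integral_nn_integral) auto
  have eq: "(\<integral>y. g (x, y) \<partial>N) = enn2real (I x)" if "x \<in> space M" for x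
    unfolding I_def using g(2) by (intro integral_eq_nn_integral measurable_Pair2[OF g(1) that]) auto
  have "has_bochner_integral M (\<lambda>x. \<integral>y. g (x, y) \<partial>N) v
      \<longleftrightarrow> has_bochner_integral M (\<lambda>x. enn2real (I x)) v"
    by (rule has_bochner_integral_cong) (simp_all add: eq)
  with hb show ?thesis by simp
qed

lemma has_bochner_integral_disc_gbm_flow:
  fixes M :: "'a measure" and W :: "real \<Rightarrow> 'a \<Rightarrow> real" and A :: "real set"
  assumes BM: "std_brownian_motion M W" and P: "0 < P"
    and u: "u \<in> borel_measurable borel" "\<And>p. 0 < p \<Longrightarrow> 0 \<le> u p"
    and A: "A \<in> sets borel" "A \<subseteq> {0..}"
    and f: "\<And>t. t \<in> A \<Longrightarrow> 0 < t \<Longrightarrow>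
              (\<integral>\<^sup>+\<omega>. ennreal (u (gbm mu sig P W t \<omega>) * exp (- r * t)) \<partial>M) = ennreal (f t)"
    and v: "(\<integral>\<^sup>+t. ennreal (indicator A t * f t) \<partial>lborel) = ennreal v" "0 \<le> v"
  shows "has_bochner_integral M (\<lambda>\<omega>. LINT t:A|lborel. u (gbm mu sig P W t \<omega>) * exp (- r * t)) v"
proof -
  \<comment> \<open>W is only specified at nonnegative times; clamping keeps g jointly measurable.\<close>
  define g where "g x = indicator A (snd x) *
      (u (P * exp ((mu - sig\<^sup>2 / 2) * snd x + sig * W (max 0 (snd x)) (fst x))) * exp (- r * snd x))"
    for x :: "'a \<times> real"
  note [measurable] = u(1) A(1) std_brownian_motion_measurable_joint[OF BM]
  have g_measurable: "g \<in> borel_measurable (M \<Otimes>\<^sub>M lborel)"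
    unfolding g_def by measurable
  have g_eq: "g (\<omega>, t) = indicator A t * (u (gbm mu sig P W t \<omega>) * exp (- r * t))" for \<omega> t
    using A(2) by (cases "t \<in> A") (auto simp: g_def gbm_def)
  have "AE t in lborel. (\<integral>\<^sup>+\<omega>. ennreal (g (\<omega>, t)) \<partial>M) = ennreal (indicator A t * f t)"
    using AE_lborel_singleton[of 0]
  proof eventually_elim
    case (elim t)
    show ?case
    proof (cases "t \<in> A")
      case True
      then show ?thesis using A(2) elim f[of t] by (force simp: g_eq)
    qed (simp add: g_eq)
  qed
  then have "(\<integral>\<^sup>+t. (\<integral>\<^sup>+\<omega>. ennreal (g (\<omega>, t)) \<partial>M) \<partial>lborel)
      = (\<integral>\<^sup>+t. ennreal (indicator A t * f t) \<partial>lborel)"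
    by (rule nn_integral_cong_AE)
  then have "has_bochner_integral M (\<lambda>\<omega>. \<integral>t. g (\<omega>, t) \<partial>lborel) v"
    using g_measurable u(2) P v
    by (intro has_bochner_integral_inner_integral prob_space_imp_sigma_finite
        std_brownian_motion_prob_space[OF BM] sigma_finite_lborel) (auto simp: g_def)
  then show ?thesis
    by (simp add: g_eq set_lebesgue_integral_def)
qed

section \<open>Partial moments of the geometric Brownian motion\<close>

text \<open>For the geometric Brownian motion, E (P_t^b) = P^b exp (moment_rate mu sig b * t).\<close>
definition moment_rate :: "real \<Rightarrow> real \<Rightarrow> real \<Rightarrow> real" where
  "moment_rate mu sig b = b * (mu - sig\<^sup>2 / 2) + sig\<^sup>2 * b\<^sup>2 / 2"

lemma moment_rate_0 [simp]: "moment_rate mu sig 0 = 0"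
  and moment_rate_1 [simp]: "moment_rate mu sig 1 = mu"
  by (simp_all add: moment_rate_def power2_eq_square)

lemma moment_rate_beta:
  assumes "0 < sig" and "0 \<le> r"
  shows "moment_rate mu sig (b1 mu sig r) = r" and "moment_rate mu sig (b2 mu sig r) = r"
proof -
  define k where "k = mu / sig\<^sup>2 - 1/2"
  define D where "D = k\<^sup>2 + 2 * r / sig\<^sup>2"
  have "0 \<le> D" using assms by (simp add: D_def)
  have rate: "moment_rate mu sig b = sig\<^sup>2 / 2 * ((b + k)\<^sup>2 - k\<^sup>2)" for b
    using assms by (simp add: moment_rate_def k_def field_simps power2_eq_square)
  have roots: "(b1 mu sig r + k)\<^sup>2 = D" "(b2 mu sig r + k)\<^sup>2 = D"
    using \<open>0 \<le> D\<close> by (simp_all add: b1_def b2_def beta1_def beta2_def k_def D_def algebra_simps)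
  have "sig\<^sup>2 / 2 * (D - k\<^sup>2) = r"
    using assms by (simp add: D_def)
  then show "moment_rate mu sig (b1 mu sig r) = r" "moment_rate mu sig (b2 mu sig r) = r"
    by (simp_all only: rate roots)
qed

lemma b2_less_b1:
  assumes "0 < sig" and "0 < r"
  shows "b2 mu sig r < b1 mu sig r"
proof -
  have "0 < (-1/2 + mu / sig\<^sup>2)\<^sup>2 + 2 * r / sig\<^sup>2"
    using assms by (intro add_nonneg_pos) auto
  then show ?thesis by (simp add: b1_def b2_def beta1_def beta2_def)
qed

lemma power_mult_std_normal_density_dbeta:
  assumes sig: "0 < sig" and t: "0 < t" and P: "0 < P" and X: "0 < X"
  shows "P powr b * std_normal_density (dbeta mu sig t b P X)
       = X powr b * exp (- moment_rate mu sig b * t) * std_normal_density (dbeta mu sig t 0 P X)"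
proof -
  obtain u where u: "0 < u" "t = u\<^sup>2"
    using t by (metis real_sqrt_gt_0_iff real_sqrt_pow2 less_eq_real_def)
  have "b * ln P - (dbeta mu sig t b P X)\<^sup>2 / 2
      = b * ln X - moment_rate mu sig b * t - (dbeta mu sig t 0 P X)\<^sup>2 / 2"
    using sig u P X
    by (simp add: dbeta_def moment_rate_def ln_div field_simps power2_eq_square)
  then show ?thesis
    using P X by (simp add: powr_def normal_density_def mult_exp_exp algebra_simps)
qed

lemma dbeta_has_real_derivative:
  assumes sig: "0 < sig" and t: "0 < t"
  shows "((\<lambda>t. dbeta mu sig t b P X) has_real_derivative
           ((mu - sig\<^sup>2 / 2) * t - ln (P / X)) / (2 * sig * t * sqrt t) + sig / (2 * sqrt t) * b) (at t)"
proof -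
  obtain u where u: "0 < u" "t = u\<^sup>2"
    using t by (metis real_sqrt_gt_0_iff real_sqrt_pow2 less_eq_real_def)
  have "((\<lambda>t. dbeta mu sig t b P X) has_real_derivative
      ((mu + sig\<^sup>2 * (b - 1/2)) * (sig * sqrt t)
        - (ln (P / X) + (mu + sig\<^sup>2 * (b - 1/2)) * t) * (inverse (sqrt t) * sig) / 2)
      / (sig * sqrt t * (sig * sqrt t))) (at t)"
    unfolding dbeta_def[abs_def] using sig t by (auto intro!: derivative_eq_intros)
  then show ?thesis
    by (rule DERIV_cong) (use sig u(1) in \<open>simp add: u(2) field_simps power2_eq_square\<close>)
qed

lemma dbeta_at_right_0:
  assumes sig: "0 < sig" and P: "0 < P" and X: "0 < X"
  shows "X < P \<Longrightarrow> filterlim (\<lambda>t. dbeta mu sig t b P X) at_top (at_right 0)"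
    and "P < X \<Longrightarrow> filterlim (\<lambda>t. dbeta mu sig t b P X) at_bot (at_right 0)"
    and "P = X \<Longrightarrow> ((\<lambda>t. dbeta mu sig t b P X) \<longlongrightarrow> 0) (at_right 0)"
proof -
  define L where "L = ln (P / X) / sig"
  define c where "c = (mu + sig\<^sup>2 * (b - 1/2)) / sig"
  have "\<forall>\<^sub>F t in at_right 0. dbeta mu sig t b P X = c * sqrt t + L * sqrt (inverse t)"
    using eventually_at_right_less[of "0::real"]
  proof eventually_elim
    case (elim t)
    then have sqrt_sqrt: "sqrt t * (sqrt t * x) = t * x" for x
      by (simp add: mult.assoc[symmetric])
    show ?case
      using elim sig unfolding real_sqrt_inverse
      by (simp add: dbeta_def L_def c_def field_simps sqrt_sqrt)
  qed
  then have dbeta_lim: "filterlim (\<lambda>t. dbeta mu sig t b P X) G (at_right 0)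
      \<longleftrightarrow> filterlim (\<lambda>t. c * sqrt t + L * sqrt (inverse t)) G (at_right 0)" for G
    by (rule filterlim_cong[OF refl refl])
  have small: "((\<lambda>t. c * sqrt t) \<longlongrightarrow> 0) (at_right 0)"
    using tendsto_mult[OF tendsto_const[of c] tendsto_real_sqrt[OF tendsto_ident_at[of 0 "{0<..}"]]]
    by simp
  have large: "filterlim (\<lambda>t. sqrt (inverse t)) at_top (at_right 0)"
    by (rule filterlim_compose[OF sqrt_at_top filterlim_inverse_at_top_right])
  show "filterlim (\<lambda>t. dbeta mu sig t b P X) at_top (at_right 0)" if "X < P"
  proof -
    have "0 < L" using that X sig by (simp add: L_def)
    then show ?thesis
      unfolding dbeta_lim
      by (intro filterlim_tendsto_add_at_top[OF small]
          filterlim_tendsto_pos_mult_at_top[OF tendsto_const _ large])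
  qed
  show "filterlim (\<lambda>t. dbeta mu sig t b P X) at_bot (at_right 0)" if "P < X"
  proof -
    have "L < 0" using that P X sig by (simp add: L_def ln_div divide_neg_pos)
    then show ?thesis
      unfolding dbeta_lim filterlim_tendsto_add_at_bot_iff[OF small]
      by (intro filterlim_tendsto_neg_mult_at_bot[OF tendsto_const _ large])
  qed
  show "((\<lambda>t. dbeta mu sig t b P X) \<longlongrightarrow> 0) (at_right 0)" if "P = X"
    using small that unfolding dbeta_lim by (simp add: L_def)
qed

lemma Phi_dbeta_tendsto_0:
  assumes sig: "0 < sig" and P: "0 < P" and X: "0 < X"
  shows "((\<lambda>t. Phi (dbeta mu sig t b P X)) \<longlongrightarrow> (if X < P then 1 else if P = X then 1/2 else 0))
           (at_right 0)"
proof -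
  consider "X < P" | "P = X" | "P < X" by linarith
  then show ?thesis
  proof cases
    case 1
    then show ?thesis
      using filterlim_compose[OF Phi_at_top dbeta_at_right_0(1)[OF assms 1]] by simp
  next
    case 2
    then show ?thesis
      using isCont_tendsto_compose[OF isCont_Phi dbeta_at_right_0(3)[OF assms 2]] by (simp add: Phi_zero)
  next
    case 3
    then show ?thesis
      using filterlim_compose[OF Phi_at_bot dbeta_at_right_0(2)[OF assms 3]] by simp
  qed
qed

lemma smooth_fit_kink_identities:
  fixes p1 p2 r mu X Q :: real
  assumes "p1 \<noteq> p2" and "r \<noteq> 0" and "r \<noteq> mu"
  defines "A \<equiv> p2 / r - (p2 - 1) / (r - mu)" and "B \<equiv> p1 / r - (p1 - 1) / (r - mu)"
  shows "- X * Q / (p1 - p2) * A + X * Q / (p1 - p2) * B + Q / (r - mu) * X + - X * Q / r = 0"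
    and "p1 * (- X * Q / (p1 - p2) * A) + p2 * (X * Q / (p1 - p2) * B) + Q / (r - mu) * X = 0"
proof -
  have d: "p1 - p2 \<noteq> 0" using assms by simp
  have "B - A = (p1 - p2) / r - ((p1 - 1) - (p2 - 1)) / (r - mu)"
    unfolding A_def B_def by (simp add: diff_divide_distrib)
  also have "\<dots> = (p1 - p2) * (1 / r - 1 / (r - mu))"
    by (simp add: algebra_simps diff_divide_distrib)
  finally have BA: "(B - A) / (p1 - p2) = 1 / r - 1 / (r - mu)"
    using d by simp
  have "p1 * A - p2 * B = (p2 * (p1 - 1) - p1 * (p2 - 1)) / (r - mu)"
    unfolding A_def B_def by (simp add: diff_divide_distrib algebra_simps)
  also have "\<dots> = (p1 - p2) / (r - mu)" by (simp add: algebra_simps)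
  finally have AB: "(p1 * A - p2 * B) / (p1 - p2) = 1 / (r - mu)"
    using d by simp
  have "- X * Q / (p1 - p2) * A + X * Q / (p1 - p2) * B = X * Q * ((B - A) / (p1 - p2))"
    by (simp add: algebra_simps diff_divide_distrib)
  then show "- X * Q / (p1 - p2) * A + X * Q / (p1 - p2) * B + Q / (r - mu) * X + - X * Q / r = 0"
    unfolding BA by (simp add: algebra_simps)
  have "p1 * (- X * Q / (p1 - p2) * A) + p2 * (X * Q / (p1 - p2) * B)
      = - X * Q * ((p1 * A - p2 * B) / (p1 - p2))"
    by (simp add: algebra_simps diff_divide_distrib)
  then show "p1 * (- X * Q / (p1 - p2) * A) + p2 * (X * Q / (p1 - p2) * B) + Q / (r - mu) * X = 0"
    unfolding AB by simp
qed

locale gbm_model =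
  fixes mu sig r :: real
  assumes sig_pos: "0 < sig" and mu_less_r: "mu < r" and r_pos: "0 < r"
begin

abbreviation "\<beta>\<^sub>1 \<equiv> b1 mu sig r"
abbreviation "\<beta>\<^sub>2 \<equiv> b2 mu sig r"

lemma moment_rate_b1 [simp]: "moment_rate mu sig \<beta>\<^sub>1 = r"
  and moment_rate_b2 [simp]: "moment_rate mu sig \<beta>\<^sub>2 = r"
  using moment_rate_beta sig_pos r_pos by auto

text \<open>e^(-r t) E (P_t^b; P_t > X) for the geometric Brownian motion started at P.\<close>
definition disc_partial_moment :: "real \<Rightarrow> real \<Rightarrow> real \<Rightarrow> real \<Rightarrow> real" where
  "disc_partial_moment b X P t =
     P powr b * exp (- (r - moment_rate mu sig b) * t) * Phi (dbeta mu sig t b P X)"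

lemma disc_partial_moment_has_real_derivative:
  assumes t: "0 < t" and P: "0 < P" and X: "0 < X"
  defines "q \<equiv> ((mu - sig\<^sup>2 / 2) * t - ln (P / X)) / (2 * sig * t * sqrt t)"
    and "h \<equiv> sig / (2 * sqrt t)"
  shows "(disc_partial_moment b X P has_real_derivative
           - (r - moment_rate mu sig b) * disc_partial_moment b X P t
           + X powr b * exp (- r * t) * std_normal_density (dbeta mu sig t 0 P X) * (q + h * b)) (at t)"
proof -
  have "(disc_partial_moment b X P has_real_derivative
      - (r - moment_rate mu sig b) * disc_partial_moment b X P t
      + exp (- (r - moment_rate mu sig b) * t) * (P powr b * std_normal_density (dbeta mu sig t b P X))
        * (q + h * b)) (at t)"
    unfolding disc_partial_moment_def[abs_def] q_def h_def
    by (rule DERIV_cong, (rule derivative_eq_intros refl dbeta_has_real_derivative[OF sig_pos t])+)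
       (simp add: algebra_simps)
  moreover have "exp (- (r - moment_rate mu sig b) * t) * (P powr b * std_normal_density (dbeta mu sig t b P X))
      = X powr b * (exp (- (r - moment_rate mu sig b) * t) * exp (- moment_rate mu sig b * t))
        * std_normal_density (dbeta mu sig t 0 P X)"
    by (simp add: power_mult_std_normal_density_dbeta[OF sig_pos t P X] ac_simps)
  also have "exp (- (r - moment_rate mu sig b) * t) * exp (- moment_rate mu sig b * t) = exp (- r * t)"
    by (simp add: mult_exp_exp algebra_simps)
  ultimately show ?thesis by (simp only:)
qed

lemma disc_partial_moment_tendsto_0:
  assumes "0 < P" and "0 < X"
  shows "(disc_partial_moment b X P \<longlongrightarrow> P powr b * (if X < P then 1 else if P = X then 1/2 else 0))
           (at_right 0)"
  unfolding disc_partial_moment_def[abs_def]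
  by (rule tendsto_eq_intros refl Phi_dbeta_tendsto_0[OF sig_pos assms] tendsto_ident_at)+ simp

text \<open>e^(-r t) E (f P_t; P_t > X) for the piece f p = a1 p^\<beta>1 + a2 p^\<beta>2 + a3 p + k,
  which solves the valuation equation with the flow a3 (r - mu) p + k r.\<close>
definition barrier_value :: "real \<Rightarrow> real \<Rightarrow> real \<Rightarrow> real \<Rightarrow> real \<Rightarrow> real \<Rightarrow> real \<Rightarrow> real" where
  "barrier_value a1 a2 a3 k X P t =
     a1 * disc_partial_moment \<beta>\<^sub>1 X P t + a2 * disc_partial_moment \<beta>\<^sub>2 X P t
     + a3 * disc_partial_moment 1 X P t + k * disc_partial_moment 0 X P t"

text \<open>Value matching and smooth pasting: the piece f and its derivative vanish at X.\<close>
definition smooth_fit :: "real \<Rightarrow> real \<Rightarrow> real \<Rightarrow> real \<Rightarrow> real \<Rightarrow> bool" where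
  "smooth_fit a1 a2 a3 k X \<longleftrightarrow>
     a1 * X powr \<beta>\<^sub>1 + a2 * X powr \<beta>\<^sub>2 + a3 * X + k = 0 \<and>
     \<beta>\<^sub>1 * a1 * X powr \<beta>\<^sub>1 + \<beta>\<^sub>2 * a2 * X powr \<beta>\<^sub>2 + a3 * X = 0"

lemma barrier_value_has_real_derivative:
  assumes fit: "smooth_fit a1 a2 a3 k X" and t: "0 < t" and P: "0 < P" and X: "0 < X"
  shows "(barrier_value a1 a2 a3 k X P has_real_derivative
           - (r - mu) * a3 * disc_partial_moment 1 X P t - r * k * disc_partial_moment 0 X P t) (at t)"
proof -
  define q where "q = ((mu - sig\<^sup>2 / 2) * t - ln (P / X)) / (2 * sig * t * sqrt t)"
  define h where "h = sig / (2 * sqrt t)"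
  define e where "e = exp (- r * t) * std_normal_density (dbeta mu sig t 0 P X)"
  note D = disc_partial_moment_has_real_derivative[OF t P X, folded q_def h_def]
  have "(barrier_value a1 a2 a3 k X P has_real_derivative
      a1 * (X powr \<beta>\<^sub>1 * e * (q + h * \<beta>\<^sub>1)) + a2 * (X powr \<beta>\<^sub>2 * e * (q + h * \<beta>\<^sub>2))
      + a3 * (- (r - mu) * disc_partial_moment 1 X P t + X * e * (q + h))
      + k * (- r * disc_partial_moment 0 X P t + e * q)) (at t)"
    unfolding barrier_value_def[abs_def]
    by (rule DERIV_cong, (rule DERIV_add DERIV_cmult D)+) (use X in \<open>simp add: e_def algebra_simps\<close>)
  then show ?thesis
    by (rule DERIV_cong) (use fit in \<open>simp add: smooth_fit_def, algebra\<close>)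
qed

lemma barrier_value_tendsto_0:
  assumes match: "a1 * X powr \<beta>\<^sub>1 + a2 * X powr \<beta>\<^sub>2 + a3 * X + k = 0" and P: "0 < P" and X: "0 < X"
  shows "(barrier_value a1 a2 a3 k X P \<longlongrightarrow>
           (if X < P then a1 * P powr \<beta>\<^sub>1 + a2 * P powr \<beta>\<^sub>2 + a3 * P + k else 0)) (at_right 0)"
proof -
  define l :: real where "l = (if X < P then 1 else if P = X then 1/2 else 0)"
  have "(barrier_value a1 a2 a3 k X P \<longlongrightarrow> (a1 * P powr \<beta>\<^sub>1 + a2 * P powr \<beta>\<^sub>2 + a3 * P + k) * l)
      (at_right 0)"
    unfolding barrier_value_def[abs_def]
    by (rule tendsto_eq_intros disc_partial_moment_tendsto_0[OF P X, folded l_def] refl)+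
       (use P in \<open>simp add: algebra_simps\<close>)
  moreover have "(a1 * P powr \<beta>\<^sub>1 + a2 * P powr \<beta>\<^sub>2 + a3 * P + k) * l
      = (if X < P then a1 * P powr \<beta>\<^sub>1 + a2 * P powr \<beta>\<^sub>2 + a3 * P + k else 0)"
    using match by (auto simp: l_def)
  ultimately show ?thesis by simp
qed

text \<open>At a kink X \<in> {F, C} of the payoff the two neighbouring branches of the perpetual value
  differ by such a piece; the coefficients are those of E1, G1, G2, H2.\<close>
lemma smooth_fit_kink:
  assumes X: "0 < X"
    and a1: "a1 = - (X powr (1 - \<beta>\<^sub>1) * Q / (\<beta>\<^sub>1 - \<beta>\<^sub>2) * (\<beta>\<^sub>2 / r - (\<beta>\<^sub>2 - 1) / (r - mu)))"
    and a2: "a2 = X powr (1 - \<beta>\<^sub>2) * Q / (\<beta>\<^sub>1 - \<beta>\<^sub>2) * (\<beta>\<^sub>1 / r - (\<beta>\<^sub>1 - 1) / (r - mu))"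
  shows "smooth_fit a1 a2 (Q / (r - mu)) (- X * Q / r) X"
proof -
  have X_powr: "X powr (1 - b) * X powr b = X" for b
    using X by (simp add: powr_add[symmetric])
  have "a1 * X powr \<beta>\<^sub>1 = - (X powr (1 - \<beta>\<^sub>1) * X powr \<beta>\<^sub>1) * Q / (\<beta>\<^sub>1 - \<beta>\<^sub>2)
      * (\<beta>\<^sub>2 / r - (\<beta>\<^sub>2 - 1) / (r - mu))"
    unfolding a1 by (simp add: algebra_simps)
  note h1 = this[unfolded X_powr]
  have "a2 * X powr \<beta>\<^sub>2 = X powr (1 - \<beta>\<^sub>2) * X powr \<beta>\<^sub>2 * Q / (\<beta>\<^sub>1 - \<beta>\<^sub>2)
      * (\<beta>\<^sub>1 / r - (\<beta>\<^sub>1 - 1) / (r - mu))"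
    unfolding a2 by (simp add: algebra_simps)
  note h2 = this[unfolded X_powr]
  have "\<beta>\<^sub>1 \<noteq> \<beta>\<^sub>2" "r \<noteq> 0" "r \<noteq> mu"
    using b2_less_b1[OF sig_pos r_pos, of mu] r_pos mu_less_r by auto
  then show ?thesis
    unfolding smooth_fit_def mult.assoc[of "\<beta>\<^sub>1"] mult.assoc[of "\<beta>\<^sub>2"] h1 h2
    by (intro conjI smooth_fit_kink_identities)
qed

lemma has_bochner_integral_spot_income:
  assumes BM: "std_brownian_motion M W" and P: "0 < P" and Q: "0 < Q" and T: "0 < T"
  shows "has_bochner_integral M (\<lambda>\<omega>. LINT t:{T..}|lborel. gbm mu sig P W t \<omega> * Q * exp (- r * t))
           (P * Q / (r - mu) * exp (- (r - mu) * T))"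
proof (rule has_bochner_integral_disc_gbm_flow[OF BM P, where u="\<lambda>p. p * Q"])
  show "(\<integral>\<^sup>+\<omega>. ennreal (gbm mu sig P W t \<omega> * Q * exp (- r * t)) \<partial>M)
      = ennreal (P * Q * exp (- (r - mu) * t))" if "0 < t" for t
  proof -
    have eq: "std_normal_density z * (gbm_normal mu sig P t z * Q * exp (- r * t))
      = Q * exp (- r * t) * (std_normal_density z * gbm_normal mu sig P t z)" for z
      by (simp add: ac_simps)
    have "integrable lborel
        (\<lambda>z. std_normal_density z * (gbm_normal mu sig P t z * Q * exp (- r * t)))"
      unfolding eq by (intro integrable_mult_right gbm_mean_integral(1)[OF that])
    then have "(\<integral>\<^sup>+\<omega>. ennreal (gbm mu sig P W t \<omega> * Q * exp (- r * t)) \<partial>M)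
      = ennreal (\<integral>z. std_normal_density z * (gbm_normal mu sig P t z * Q * exp (- r * t)) \<partial>lborel)"
      using Q by (intro nn_integral_gbm[OF BM that P]) auto
    also have "\<dots> = ennreal (Q * exp (- r * t) * (P * exp (mu * t)))"
      unfolding eq integral_mult_right_zero gbm_mean_integral(2)[OF that] ..
    also have "\<dots> = ennreal (P * Q * exp (- (r - mu) * t))"
      by (simp add: mult_exp_exp algebra_simps)
    finally show ?thesis .
  qed
  have "((\<lambda>t. P * Q * exp (- (r - mu) * t)) has_integral P * Q / (r - mu) * exp (- (r - mu) * T)) {T..}"
    using has_integral_mult_right[OF has_integral_exp_minus_to_infinity[of "r - mu" T], of "P * Q"] mu_less_r
    by (simp add: field_simps)
  then show "(\<integral>\<^sup>+t. ennreal (indicator {T..} t * (P * Q * exp (- (r - mu) * t))) \<partial>lborel)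
      = ennreal (P * Q / (r - mu) * exp (- (r - mu) * T))"
    using P Q by (intro nn_integral_has_integral_lebesgue) auto
qed (use P Q T mu_less_r in auto)

end

section \<open>The collar\<close>

lemma collar_payoff_eq_calls:
  "F \<le> C \<Longrightarrow> collar_payoff F C Q p = Q * (F + max (p - F) 0 - max (p - C) 0)"
  unfolding collar_payoff_def by (auto simp: min_def max_def algebra_simps)

locale collar = gbm_model +
  fixes Q F C :: real
  assumes Q_pos: "0 < Q" and F_pos: "0 < F" and F_le_C: "F \<le> C"
begin

lemma C_pos: "0 < C"
  using F_pos F_le_C by simp

lemma smooth_fit_F:
  "smooth_fit (G1 mu sig r Q C - E1 mu sig r Q F C) (G2 mu sig r Q F) (Q / (r - mu)) (- F * Q / r) F"
  by (rule smooth_fit_kink[OF F_pos]) (simp_all add: G1_def E1_def G2_def algebra_simps diff_divide_distrib)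

lemma smooth_fit_C:
  "smooth_fit (G1 mu sig r Q C) (G2 mu sig r Q F - H2 mu sig r Q F C) (Q / (r - mu)) (- C * Q / r) C"
  by (rule smooth_fit_kink[OF C_pos]) (simp_all add: G1_def G2_def H2_def algebra_simps diff_divide_distrib)

text \<open>By Phi (- d) = 1 - Phi d, S_C is the discounted expectation of the branch of V_CP below F,
  corrected by the barrier values of the changes of branch at F and at C.\<close>
lemma S_C_eq_barrier_values:
  assumes "0 < P"
  shows "S_C mu sig r Q F C t P
    = E1 mu sig r Q F C * P powr \<beta>\<^sub>1 + F * Q / r * exp (- r * t)
      + barrier_value (G1 mu sig r Q C - E1 mu sig r Q F C) (G2 mu sig r Q F) (Q / (r - mu))
          (- F * Q / r) F P t
      - barrier_value (G1 mu sig r Q C) (G2 mu sig r Q F - H2 mu sig r Q F C) (Q / (r - mu))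
          (- C * Q / r) C P t"
proof -
  have "r \<noteq> 0" "r - mu \<noteq> 0" using r_pos mu_less_r by auto
  then show ?thesis
    using assms
    by (simp add: S_C_def Let_def barrier_value_def disc_partial_moment_def Phi_minus)
       (simp add: algebra_simps add_divide_distrib diff_divide_distrib)
qed

text \<open>e^(-r t) E (collar_payoff F C Q P_t) for the geometric Brownian motion started at P.\<close>
definition disc_expected_payoff :: "real \<Rightarrow> real \<Rightarrow> real" where
  "disc_expected_payoff P t = exp (- r * t) * Q *
     (F * Phi (- dbeta mu sig t 0 P F)
      + P * exp (mu * t) * (Phi (dbeta mu sig t 1 P F) - Phi (dbeta mu sig t 1 P C))
      + C * Phi (dbeta mu sig t 0 P C))"

lemma disc_expected_payoff_nonneg:
  assumes "0 < t" and "0 < P"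
  shows "0 \<le> disc_expected_payoff P t"
proof -
  have "ln (P / C) \<le> ln (P / F)"
    using assms F_pos F_le_C by (simp add: ln_div)
  then have "dbeta mu sig t 1 P C \<le> dbeta mu sig t 1 P F"
    unfolding dbeta_def using sig_pos assms by (intro divide_right_mono) auto
  then show ?thesis
    unfolding disc_expected_payoff_def using assms F_pos C_pos Q_pos Phi_mono[of _ _]
    by (intro mult_nonneg_nonneg add_nonneg_nonneg Phi_nonneg) auto
qed

lemma isCont_disc_expected_payoff: "0 < t \<Longrightarrow> isCont (disc_expected_payoff P) t"
  unfolding disc_expected_payoff_def dbeta_def[abs_def] using sig_pos
  by (auto intro!: continuous_intros)

lemma S_C_has_real_derivative:
  assumes t: "0 < t" and P: "0 < P"
  shows "((\<lambda>t. S_C mu sig r Q F C t P) has_real_derivative - disc_expected_payoff P t) (at t)"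
proof -
  have nz: "r \<noteq> 0" and cancel: "(mu - r) * x / (r - mu) = - x" for x
    using r_pos mu_less_r by (auto simp: field_simps)
  have "((\<lambda>t. S_C mu sig r Q F C t P) has_real_derivative
      - F * Q * exp (- r * t)
      - Q * disc_partial_moment 1 F P t + F * Q * disc_partial_moment 0 F P t
      + Q * disc_partial_moment 1 C P t - C * Q * disc_partial_moment 0 C P t) (at t)"
    unfolding S_C_eq_barrier_values[OF P]
    by (rule DERIV_cong, (rule derivative_eq_intros barrier_value_has_real_derivative
          smooth_fit_F smooth_fit_C t P F_pos C_pos refl)+) (use nz in \<open>simp add: cancel mult.assoc\<close>)
  moreover have "exp (- (r - mu) * t) = exp (- r * t) * exp (mu * t)"
    by (simp add: mult_exp_exp algebra_simps)
  ultimately show ?thesis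
    using P by (simp add: disc_partial_moment_def disc_expected_payoff_def Phi_minus algebra_simps)
qed

lemma S_C_tendsto_V_CP:
  assumes P: "0 < P"
  shows "((\<lambda>t. S_C mu sig r Q F C t P) \<longlongrightarrow> V_CP mu sig r Q F C P) (at_right 0)"
proof -
  define pF where "pF p = (G1 mu sig r Q C - E1 mu sig r Q F C) * p powr \<beta>\<^sub>1
    + G2 mu sig r Q F * p powr \<beta>\<^sub>2 + Q / (r - mu) * p - F * Q / r" for p
  define pC where "pC p = G1 mu sig r Q C * p powr \<beta>\<^sub>1
    + (G2 mu sig r Q F - H2 mu sig r Q F C) * p powr \<beta>\<^sub>2 + Q / (r - mu) * p - C * Q / r" for p
  have match: "pF F = 0" "pC C = 0"
    using smooth_fit_F smooth_fit_C by (simp_all add: smooth_fit_def pF_def pC_def)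
  have "((\<lambda>t. S_C mu sig r Q F C t P) \<longlongrightarrow> E1 mu sig r Q F C * P powr \<beta>\<^sub>1 + F * Q / r
      + (if F < P then pF P else 0) - (if C < P then pC P else 0)) (at_right 0)"
    unfolding S_C_eq_barrier_values[OF P] pF_def pC_def
    by (rule tendsto_eq_intros barrier_value_tendsto_0 tendsto_ident_at refl P F_pos C_pos
        smooth_fit_F[unfolded smooth_fit_def, THEN conjunct1]
        smooth_fit_C[unfolded smooth_fit_def, THEN conjunct1])+ (simp add: algebra_simps)
  moreover have "E1 mu sig r Q F C * P powr \<beta>\<^sub>1 + F * Q / r
      + (if F < P then pF P else 0) - (if C < P then pC P else 0) = V_CP mu sig r Q F C P"
  proof -
    consider "P < F" | "P = F" "F = C" | "F \<le> P" "P < C" | "C \<le> P" "F < P"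
      using F_le_C by linarith
    then show ?thesis
    proof cases
      case 1 then show ?thesis using F_le_C by (simp add: V_CP_def)
    next
      case 2 then show ?thesis using match by (simp add: V_CP_def pF_def pC_def algebra_simps)
    next
      case 3 then show ?thesis using match by (auto simp: V_CP_def pF_def algebra_simps)
    next
      case 4 then show ?thesis using match by (auto simp: V_CP_def pF_def pC_def algebra_simps)
    qed
  qed
  ultimately show ?thesis by simp
qed

lemma collar_payoff_nonneg: "0 \<le> collar_payoff F C Q p"
  unfolding collar_payoff_def using F_pos F_le_C Q_pos by (auto simp: min_def max_def)

lemma nn_integral_disc_collar_payoff:
  assumes BM: "std_brownian_motion M W" and t: "0 < t" and P: "0 < P"
  shows "(\<integral>\<^sup>+\<omega>. ennreal (collar_payoff F C Q (gbm mu sig P W t \<omega>) * exp (- r * t)) \<partial>M)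
           = ennreal (disc_expected_payoff P t)"
proof -
  have eq: "std_normal_density z * (collar_payoff F C Q (gbm_normal mu sig P t z) * exp (- r * t))
      = exp (- r * t) * Q * (F * std_normal_density z
          + std_normal_density z * max (gbm_normal mu sig P t z - F) 0
          - std_normal_density z * max (gbm_normal mu sig P t z - C) 0)" for z
    by (simp add: collar_payoff_eq_calls[OF F_le_C] algebra_simps)
  note call_F = gbm_call_integral[OF sig_pos t P F_pos, of mu]
    and call_C = gbm_call_integral[OF sig_pos t P C_pos, of mu]
  have "integrable lborel
      (\<lambda>z. std_normal_density z * (collar_payoff F C Q (gbm_normal mu sig P t z) * exp (- r * t)))"
    unfolding eq using call_F(1) call_C(1)
    by (intro integrable_mult_right Bochner_Integration.integrable_diff Bochner_Integration.integrable_add) auto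
  then have "(\<integral>\<^sup>+\<omega>. ennreal (collar_payoff F C Q (gbm mu sig P W t \<omega>) * exp (- r * t)) \<partial>M)
      = ennreal (\<integral>z. std_normal_density z * (collar_payoff F C Q (gbm_normal mu sig P t z) * exp (- r * t))
          \<partial>lborel)"
    using collar_payoff_nonneg
    by (intro nn_integral_gbm[OF BM t P]) (auto simp: collar_payoff_def)
  also have "\<dots> = ennreal (exp (- r * t) * Q *
      (F + (P * exp (mu * t) * Phi (dbeta mu sig t 1 P F) - F * Phi (dbeta mu sig t 0 P F))
         - (P * exp (mu * t) * Phi (dbeta mu sig t 1 P C) - C * Phi (dbeta mu sig t 0 P C))))"
    unfolding eq using call_F call_C
    by (simp add: Bochner_Integration.integral_diff Bochner_Integration.integral_add
        Bochner_Integration.integrable_diff Bochner_Integration.integrable_add)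
  also have "\<dots> = ennreal (disc_expected_payoff P t)"
    by (simp add: disc_expected_payoff_def Phi_minus algebra_simps)
  finally show ?thesis .
qed

lemma nn_integral_disc_expected_payoff:
  assumes P: "0 < P" and T: "0 < T"
  shows "(\<integral>\<^sup>+t. ennreal (indicator {0..T} t * disc_expected_payoff P t) \<partial>lborel)
           = ennreal (V_CP mu sig r Q F C P - S_C mu sig r Q F C T P)"
    and "0 \<le> V_CP mu sig r Q F C P - S_C mu sig r Q F C T P"
proof -
  have D: "DERIV (\<lambda>t. - S_C mu sig r Q F C t P) t :> disc_expected_payoff P t" if "0 < t" for t
    using DERIV_minus[OF S_C_has_real_derivative[OF that P]] by simp
  have lim_0: "(((\<lambda>t. - S_C mu sig r Q F C t P) \<circ> real_of_ereal) \<longlongrightarrow> - V_CP mu sig r Q F C P)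
      (at_right 0)"
    unfolding zero_ereal_def ereal_tendsto_simps using tendsto_minus[OF S_C_tendsto_V_CP[OF P]] by simp
  have lim_T: "(((\<lambda>t. - S_C mu sig r Q F C t P) \<circ> real_of_ereal) \<longlongrightarrow> - S_C mu sig r Q F C T P)
      (at_left (ereal T))"
    unfolding ereal_tendsto_simps using DERIV_isCont[OF D[OF T]] by (simp add: isCont_def filterlim_at_split)
  note ftc = interval_integral_FTC_nonneg[OF _ D isCont_disc_expected_payoff _ lim_0 lim_T]
  have int: "integrable lborel (\<lambda>t. indicator {0<..<T} t * disc_expected_payoff P t)"
    and val: "(\<integral>t. indicator {0<..<T} t * disc_expected_payoff P t \<partial>lborel)
      = V_CP mu sig r Q F C P - S_C mu sig r Q F C T P"
    using ftc T disc_expected_payoff_nonneg[OF _ P]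
    by (auto simp: zero_ereal_def interval_lebesgue_integral_def set_lebesgue_integral_def
        set_integrable_def intro!: AE_I2)
  have nonneg: "AE t in lborel. 0 \<le> indicator {0<..<T} t * disc_expected_payoff P t"
    using disc_expected_payoff_nonneg[OF _ P] by (intro AE_I2) (auto simp: indicator_def)
  have "AE t in lborel. ennreal (indicator {0..T} t * disc_expected_payoff P t)
      = ennreal (indicator {0<..<T} t * disc_expected_payoff P t)"
    using AE_lborel_singleton[of 0] AE_lborel_singleton[of T]
    by eventually_elim (auto simp: indicator_def)
  then show "(\<integral>\<^sup>+t. ennreal (indicator {0..T} t * disc_expected_payoff P t) \<partial>lborel)
      = ennreal (V_CP mu sig r Q F C P - S_C mu sig r Q F C T P)"
    by (simp add: nn_integral_cong_AE nn_integral_eq_integral[OF int nonneg] val)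
  show "0 \<le> V_CP mu sig r Q F C P - S_C mu sig r Q F C T P"
    unfolding val[symmetric] by (rule integral_nonneg_AE[OF nonneg])
qed

lemma has_bochner_integral_collar_income:
  assumes BM: "std_brownian_motion M W" and P: "0 < P" and T: "0 < T"
  shows "has_bochner_integral M
           (\<lambda>\<omega>. LINT t:{0..T}|lborel. collar_payoff F C Q (gbm mu sig P W t \<omega>) * exp (- r * t))
           (V_CP mu sig r Q F C P - S_C mu sig r Q F C T P)"
proof (rule has_bochner_integral_disc_gbm_flow[OF BM P _ _ _ _ _ nn_integral_disc_expected_payoff[OF P T]])
  show "collar_payoff F C Q \<in> borel_measurable borel"
    unfolding collar_payoff_def[abs_def] by measurable
qed (use collar_payoff_nonneg nn_integral_disc_collar_payoff[OF BM _ P] in auto)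

end

theorem proposition1:
  fixes M :: "'a measure" and W :: "real \<Rightarrow> 'a \<Rightarrow> real"
    and mu sig r Q T F C P :: real
  assumes "std_brownian_motion M W"
    and "sig > 0" and "r > mu" and "r > 0"
    and "Q > 0" and "T > 0" and "P > 0"
    and "0 < F" and "F \<le> C"
  shows "V_C M W mu sig r Q T F C P
           = V_CP mu sig r Q F C P - S_C mu sig r Q F C T P
             + P * Q / (r - mu) * exp (- (r - mu) * T)"
proof -
  interpret collar mu sig r Q F C
    using assms by unfold_locales auto
  have "has_bochner_integral M
      (\<lambda>\<omega>. (LINT t:{0..T}|lborel. collar_payoff F C Q (gbm mu sig P W t \<omega>) * exp (- r * t))
         + (LINT t:{T..}|lborel. gbm mu sig P W t \<omega> * Q * exp (- r * t)))
      (V_CP mu sig r Q F C P - S_C mu sig r Q F C T P + P * Q / (r - mu) * exp (- (r - mu) * T))"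
    using assms
    by (intro has_bochner_integral_add has_bochner_integral_collar_income has_bochner_integral_spot_income)
  then show ?thesis
    unfolding V_C_def by (rule has_bochner_integral_integral_eq)
qed

end
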